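(* Let $X_1,\dots,X_n$ ($n\ge 1$) and $Y$ be jointly distributed discrete random variables with $I(\mathbf X;Y)>0$, where $\mathbf X=(X_1,\dots,X_n)$, and let $\Pi$ be a partial information decomposition (as defined in the context) with $\Pi(\alpha)\ge 0$ for all $\alpha\in\mathcal A_n$. Then $$\frac{I_{\mathrm r}^{(0)}(\mathbf X;Y)}{I(\mathbf X;Y)}\ge 1-\bar r\qquad\text{and}\qquad \frac{I_{\mathrm v}^{(0)}(\mathbf X;Y)}{I(\mathbf X;Y)}\ge 1-\bar v.$$
   Context: Notation: $[n]=\{1,\dots,n\}$. For $\mathbf a\subseteq[n]$, $X_{\mathbf a}=(X_i)_{i\in\mathbf a}$. Antichains: $\mathcal A_n$ is the set of all nonempty collections $\alpha$ of nonempty subsets of $[n]$ such that no element of $\alpha$ is a proper subset of another element of $\alpha$. Partial information decomposition (PID): any function $\Pi:\mathcal A_n\to\mathbb R$ satisfying, for every nonempty $\mathbf a\subseteq[n]$, $$I(X_{\mathbf a};Y)=\sum_{\alpha\in\mathcal A_n:\ \exists \mathbf b\in\alpha,\ \mathbf b\subseteq \mathbf a}\Pi(\alpha).$$ Degree of redundancy: $r(\alpha)=|\{i\in[n]: \{i\}\in\alpha\}|$. Degree of vulnerability: $v(\alpha)=|\{i\in[n]: i\in\mathbf b\text{ for all }\mathbf b\in\alpha\}|$. $I_{\mathrm r}^{(k)}(\mathbf X;Y)=\sum_{\alpha:\ r(\alpha)=k}\Pi(\alpha)$, $I_{\mathrm v}^{(k)}(\mathbf X;Y)=\sum_{\alpha:\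 v(\alpha)=k}\Pi(\alpha)$. Average degrees: $\bar r=\sum_{k=0}^n k\,I_{\mathrm r}^{(k)}(\mathbf X;Y)/I(\mathbf X;Y)$ and $\bar v=\sum_{k=0}^n k\,I_{\mathrm v}^{(k)}(\mathbf X;Y)/I(\mathbf X;Y)$. *)

theory Defs
  imports "HOL-Probability.Probability"
begin

definition antichains :: "nat \<Rightarrow> nat set set set" where
  "antichains n = {\<alpha>. \<alpha> \<noteq> {} \<and> (\<forall>b\<in>\<alpha>. b \<noteq> {} \<and> b \<subseteq> {1..n})
       \<and> (\<forall>b\<in>\<alpha>. \<forall>c\<in>\<alpha>. \<not> b \<subset> c)}"

definition subvec :: "(nat \<Rightarrow> 'm \<Rightarrow> 'a) \<Rightarrow> nat set \<Rightarrow> 'm \<Rightarrow> 'a list" where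
  "subvec X a = (\<lambda>\<omega>. map (\<lambda>i. X i \<omega>) (sorted_list_of_set a))"

definition MI :: "'m measure \<Rightarrow> ('m \<Rightarrow> 'c) \<Rightarrow> ('m \<Rightarrow> 'd) \<Rightarrow> real" where
  "MI M U V = prob_space.mutual_information M 2
      (count_space (U ` space M)) (count_space (V ` space M)) U V"

definition is_PID :: "'m measure \<Rightarrow> nat \<Rightarrow> (nat \<Rightarrow> 'm \<Rightarrow> 'a) \<Rightarrow> ('m \<Rightarrow> 'b)
    \<Rightarrow> (nat set set \<Rightarrow> real) \<Rightarrow> bool" where
  "is_PID M n X Y Pid \<longleftrightarrow> (\<forall>a. a \<noteq> {} \<and> a \<subseteq> {1..n} \<longrightarrow>
     MI M (subvec X a) Y = (\<Sum>\<alpha>\<in>{\<alpha>\<in>antichains n. \<exists>b\<in>\<alpha>. b \<subseteq> a}. Pid \<alpha>))"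

definition red_deg :: "nat \<Rightarrow> nat set set \<Rightarrow> nat" where
  "red_deg n \<alpha> = card {i\<in>{1..n}. {i} \<in> \<alpha>}"

definition vul_deg :: "nat \<Rightarrow> nat set set \<Rightarrow> nat" where
  "vul_deg n \<alpha> = card {i\<in>{1..n}. \<forall>b\<in>\<alpha>. i \<in> b}"

definition I_r :: "nat \<Rightarrow> (nat set set \<Rightarrow> real) \<Rightarrow> nat \<Rightarrow> real" where
  "I_r n Pid k = (\<Sum>\<alpha>\<in>{\<alpha>\<in>antichains n. red_deg n \<alpha> = k}. Pid \<alpha>)"

definition I_v :: "nat \<Rightarrow> (nat set set \<Rightarrow> real) \<Rightarrow> nat \<Rightarrow> real" where
  "I_v n Pid k = (\<Sum>\<alpha>\<in>{\<alpha>\<in>antichains n. vul_deg n \<alpha> = k}. Pid \<alpha>)"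

end

theory Submission
  imports Defs
begin

text \<open>Taking \<open>a = [n]\<close> in the defining identity of a PID shows that \<open>I(X;Y)\<close> is the sum of
  \<open>\<Pi>\<close> over all antichains. Grouping the antichains by their degree \<open>k \<in> {0..n}\<close> gives
  \<open>I(X;Y) = \<Sum>\<^sub>k I\<^sup>k\<close>, and as every \<open>I\<^sup>k\<close> is nonnegative,
  \<open>\<Sum>\<^sub>k\<^sub>\<ge>\<^sub>1 I\<^sup>k \<le> \<Sum>\<^sub>k k I\<^sup>k\<close>; dividing by \<open>I(X;Y) > 0\<close> gives both bounds.\<close>

lemma finite_antichains: "finite (antichains n)"
proof (rule finite_subset)
  show "antichains n \<subseteq> Pow (Pow {1..n})" unfolding antichains_def by auto
qed simp

lemma MI_eq_sum_antichains_if_is_PID: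
  assumes "is_PID M n X Y Pid" and "n \<ge> 1"
  shows "MI M (subvec X {1..n}) Y = (\<Sum>\<alpha>\<in>antichains n. Pid \<alpha>)"
proof -
  have "MI M (subvec X {1..n}) Y = (\<Sum>\<alpha>\<in>{\<alpha>\<in>antichains n. \<exists>b\<in>\<alpha>. b \<subseteq> {1..n}}. Pid \<alpha>)"
    using assms unfolding is_PID_def by simp
  also have "{\<alpha>\<in>antichains n. \<exists>b\<in>\<alpha>. b \<subseteq> {1..n}} = antichains n"
    unfolding antichains_def by auto
  finally show ?thesis .
qed

lemma card_filter_atLeastAtMost_le: "card {i\<in>{1..n}. P i} \<le> (n::nat)"
proof -
  have "card {i\<in>{1..n}. P i} \<le> card {1..n}" by (rule card_mono) auto
  then show ?thesis by simp
qed

lemma sum_le_fiber0_plus_weighted_fibers: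
  fixes f :: "'a \<Rightarrow> nat" and w :: "'a \<Rightarrow> real"
  assumes "finite A"
    and f_le: "\<And>x. x \<in> A \<Longrightarrow> f x \<le> n"
    and w_nonneg: "\<And>x. x \<in> A \<Longrightarrow> w x \<ge> 0"
  defines "g \<equiv> \<lambda>k. \<Sum>x\<in>{x\<in>A. f x = k}. w x"
  shows "(\<Sum>x\<in>A. w x) \<le> g 0 + (\<Sum>k=0..n. real k * g k)"
proof -
  have g_nonneg: "g k \<ge> 0" for k
    unfolding g_def by (rule sum_nonneg) (simp add: w_nonneg)
  have "(\<Sum>x\<in>A. w x) = (\<Sum>k=0..n. g k)"
    unfolding g_def by (rule sum.group[symmetric]) (auto simp: assms(1) f_le)
  also have "\<dots> = g 0 + (\<Sum>k=1..n. g k)"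
    by (simp add: sum.atLeast_Suc_atMost)
  also have "(\<Sum>k=1..n. g k) \<le> (\<Sum>k=1..n. real k * g k)"
  proof (rule sum_mono)
    fix k assume "k \<in> {1..n}"
    then show "g k \<le> real k * g k"
      using mult_right_mono[OF _ g_nonneg, of 1 "real k" k] by simp
  qed
  also have "\<dots> = (\<Sum>k=0..n. real k * g k)"
    by (simp add: sum.atLeast_Suc_atMost)
  finally show ?thesis by simp
qed

lemma one_minus_divide_le_divide:
  fixes c a b :: real
  assumes "c > 0" and "c \<le> a + b"
  shows "1 - b / c \<le> a / c"
proof -
  have "1 - b / c = (c - b) / c" using assms(1) by (simp add: field_simps)
  also have "\<dots> \<le> a / c" using assms by (intro divide_right_mono) auto
  finally show ?thesis .
qed

theorem proposition5:
  fixes M :: "'m measure" and n :: nat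
    and X :: "nat \<Rightarrow> 'm \<Rightarrow> 'a::countable" and Y :: "'m \<Rightarrow> 'b::countable"
    and Pid :: "nat set set \<Rightarrow> real"
  assumes "prob_space M"
    and "n \<ge> 1"
    and "\<And>i. i \<in> {1..n} \<Longrightarrow> X i \<in> measurable M (count_space UNIV)"
    and "Y \<in> measurable M (count_space UNIV)"
    and "MI M (subvec X {1..n}) Y > 0"
    and "is_PID M n X Y Pid"
    and "\<And>\<alpha>. \<alpha> \<in> antichains n \<Longrightarrow> Pid \<alpha> \<ge> 0"
  shows "I_r n Pid 0 / MI M (subvec X {1..n}) Y
           \<ge> 1 - (\<Sum>k=0..n. real k * I_r n Pid k) / MI M (subvec X {1..n}) Y
         \<and> I_v n Pid 0 / MI M (subvec X {1..n}) Y
           \<ge> 1 - (\<Sum>k=0..n. real k * I_v n Pid k) / MI M (subvec X {1..n}) Y"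
proof -
  have total: "MI M (subvec X {1..n}) Y = (\<Sum>\<alpha>\<in>antichains n. Pid \<alpha>)"
    using assms(6,2) by (rule MI_eq_sum_antichains_if_is_PID)
  have "MI M (subvec X {1..n}) Y \<le> I_r n Pid 0 + (\<Sum>k=0..n. real k * I_r n Pid k)"
    unfolding total I_r_def red_deg_def
    by (rule sum_le_fiber0_plus_weighted_fibers[OF finite_antichains
          card_filter_atLeastAtMost_le assms(7)])
  moreover have "MI M (subvec X {1..n}) Y \<le> I_v n Pid 0 + (\<Sum>k=0..n. real k * I_v n Pid k)"
    unfolding total I_v_def vul_deg_def
    by (rule sum_le_fiber0_plus_weighted_fibers[OF finite_antichains
          card_filter_atLeastAtMost_le assms(7)])
  ultimately show ?thesis
    using assms(5) by (simp add: one_minus_divide_le_divide)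
qed

end
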